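(* Let $G=(V,E)$ be a finite connected undirected graph with $V=\{1,\dots,n\}$, symmetric nonnegative adjacency matrix $W=W^T$ with every row having a positive entry, $D=\operatorname{diag}(d_1,\dots,d_n)$ with $d_i=\sum_j W_{ij}$, and $P=D^{-1}W$. Let $A=\operatorname{diag}(\alpha_1,\dots,\alpha_n)$ with $\alpha_i\in(0,1)$ for all $i$. For $i\in V$ let $$K_i(A)=\frac{1}{e_i^T[I-AP]^{-1}\underline{1}}.$$ Then for all $i,j\in V$, $$\frac{d_i}{\alpha_i K_i(A)}\,\pi_j(i)=\frac{d_j}{\alpha_j K_j(A)}\,\pi_i(j),$$ where $\pi_j(i)$ denotes the Occupation-time Personalized PageRank of node $j$ with restart distribution $e_i^T$.
   Context: $e_i$ is the $i$th standard basis column vector and $\underline{1}$ the all-ones column vector. For a probability vector $v$ on $V$, consider the Markov chain $(X_t)$ on $V$ with transition matrix $\tilde P=AP+(I-A)\underline{1}v^T$ (at node $i$, with probability $1-\alpha_i$ the walk restarts at a node drawn from $v$, otherwise it moves according to $P$). The Occupation-time Personalized PageRank is $\pi_j(v)=\lim_{t\to\infty}\mathbb P(X_t=j)$, the stationary distribution of $\tilde P$; and $\pi_j(i):=\pi_j(e_i^T)$. *)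

theory Defs
  imports "HOL-Analysis.Analysis"
begin

text \<open>Vertices are the elements of a finite type 'n (playing the role of {1..n}).
  Matrices are real^'n^'n, vectors real^'n.\<close>

definition degree :: "real^'n^'n \<Rightarrow> 'n::finite \<Rightarrow> real" where
  "degree W i = (\<Sum>j\<in>UNIV. W $ i $ j)"

definition degmat :: "real^'n^'n \<Rightarrow> real^'n^'n::finite" where
  "degmat W = (\<chi> i j. if i = j then degree W i else 0)"

definition transmat :: "real^'n^'n \<Rightarrow> real^'n^'n::finite" where
  "transmat W = matrix_inv (degmat W) ** W"

definition diagmat :: "('n \<Rightarrow> real) \<Rightarrow> real^'n^'n::finite" where
  "diagmat a = (\<chi> i j. if i = j then a i else 0)"

definition ones :: "real^'n::finite" where
  "ones = (\<chi> i. 1)"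

definition outer :: "real^'n \<Rightarrow> real^'n \<Rightarrow> real^'n^'n::finite" where
  "outer x y = (\<chi> i j. x $ i * y $ j)"

definition graph_connected :: "real^'n^'n::finite \<Rightarrow> bool" where
  "graph_connected W \<longleftrightarrow> (\<forall>i j. (i, j) \<in> {(k, l). W $ k $ l > 0}\<^sup>*)"

definition restart_mat :: "real^'n^'n \<Rightarrow> ('n \<Rightarrow> real) \<Rightarrow> real^'n \<Rightarrow> real^'n^'n::finite" where
  "restart_mat W \<alpha> v = diagmat \<alpha> ** transmat W + (mat 1 - diagmat \<alpha>) ** outer ones v"

text \<open>Distribution of X_t (row vector) when X_0 is drawn from v.\<close>
primrec distr :: "real^'n^'n \<Rightarrow> real^'n \<Rightarrow> nat \<Rightarrow> real^'n::finite" where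
  "distr M v 0 = v"
| "distr M v (Suc t) = distr M v t v* M"

text \<open>Occupation-time personalized PageRank: \<pi>_j(v) = lim_t P(X_t = j).\<close>
definition pagerank :: "real^'n^'n \<Rightarrow> ('n \<Rightarrow> real) \<Rightarrow> real^'n \<Rightarrow> 'n \<Rightarrow> real" where
  "pagerank W \<alpha> v j = lim (\<lambda>t. distr (restart_mat W \<alpha> v) v t $ j)"

definition Kval :: "real^'n^'n \<Rightarrow> ('n \<Rightarrow> real) \<Rightarrow> 'n::finite \<Rightarrow> real" where
  "Kval W \<alpha> i = 1 / ((matrix_inv (mat 1 - diagmat \<alpha> ** transmat W) *v ones) $ i)"

end

theory Submission
  imports Defs
begin

text \<open>Let R = (I - AP)^-1, the fundamental matrix of the walk that is killed, rather than
  restarted, with probability 1 - \<alpha>_k at node k.  The row vector e_i^T R satisfies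
  e_i^T R (I - AP) = e_i^T, and since P preserves total mass this says exactly that e_i^T R is
  invariant for the walk restarting at i; its mass is e_i^T R 1 = 1 / K_i(A), so
  \<pi>_j(i) = K_i(A) R_ij.  Every step restarts at i with probability at least min_k (1 - \<alpha>_k) > 0,
  a Doeblin condition that makes the walk converge geometrically to this invariant vector.
  The claim thus reduces to the symmetry of D A^-1 R, which holds because
  D A^-1 (I - AP) = D A^-1 - W is symmetric.\<close>

definition row_stochastic :: "real^'n^'n::finite \<Rightarrow> bool" where
  "row_stochastic M \<longleftrightarrow> (\<forall>i j. 0 \<le> M $ i $ j) \<and> (\<forall>i. (\<Sum>j\<in>UNIV. M $ i $ j) = 1)"

lemma matrix_inv_eq_right_inverse:
  fixes A B :: "'a::field^'n^'n"
  assumes right: "A ** B = mat 1"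
  shows "matrix_inv A = B"
  unfolding matrix_inv_def
proof (rule some_equality)
  show "A ** B = mat 1 \<and> B ** A = mat 1"
    using right matrix_left_right_inverse[THEN iffD1, OF right] by blast
next
  fix X assume "A ** X = mat 1 \<and> X ** A = mat 1"
  then have "X ** A = mat 1" ..
  have "X = X ** (A ** B)" using right by simp
  also have "\<dots> = B" using \<open>X ** A = mat 1\<close> by (simp add: matrix_mul_assoc)
  finally show "X = B" .
qed

lemma ex_argmin_finite:
  fixes f :: "'a::finite \<Rightarrow> 'b::linorder"
  obtains l where "\<And>k. f l \<le> f k"
proof
  show "f (arg_min_on f UNIV) \<le> f k" for k
    by (rule arg_min_least) auto
qed

lemma diagmat_mult_component: "(diagmat a ** X) $ i $ j = a i * X $ i $ j"
  unfolding matrix_matrix_mult_def diagmat_def by (simp add: if_distrib[of "\<lambda>c. c * _"] cong: if_cong)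

lemma axis_vector_matrix_mult_component: "(axis i 1 v* A) $ j = A $ i $ j"
  unfolding vector_matrix_mult_def axis_def by (simp add: if_distrib[of "\<lambda>c. c * _"] cong: if_cong)

lemma sum_vector_matrix_mult:
  "(\<Sum>j\<in>UNIV. (y v* M) $ j) = (\<Sum>k\<in>UNIV. y $ k * (\<Sum>j\<in>UNIV. M $ k $ j))"
  unfolding vector_matrix_mult_def by (simp add: sum_distrib_left) (rule sum.swap)

lemma row_stochastic_sum_vector_matrix_mult:
  "row_stochastic M \<Longrightarrow> (\<Sum>j\<in>UNIV. (y v* M) $ j) = (\<Sum>k\<in>UNIV. y $ k)"
  by (simp add: sum_vector_matrix_mult row_stochastic_def)

lemma row_stochastic_le_1: "row_stochastic M \<Longrightarrow> M $ k $ j \<le> 1"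
  using member_le_sum[of j UNIV "\<lambda>j. M $ k $ j"] by (auto simp: row_stochastic_def)

lemma row_stochastic_contraction:
  assumes M: "row_stochastic M" and minor: "\<And>k. c \<le> M $ k $ i"
    and balanced: "(\<Sum>k\<in>UNIV. y $ k) = 0"
  shows "(\<Sum>j\<in>UNIV. \<bar>(y v* M) $ j\<bar>) \<le> (1 - c) * (\<Sum>k\<in>UNIV. \<bar>y $ k\<bar>)"
proof -
  define Q where "Q k j = M $ k $ j - (if j = i then c else 0)" for k j
  have Q_nonneg: "0 \<le> Q k j" for k j
    using M minor[of k] unfolding Q_def row_stochastic_def by auto
  have Q_row: "(\<Sum>j\<in>UNIV. Q k j) = 1 - c" for k
    using M unfolding Q_def row_stochastic_def by (simp add: sum_subtractf)
  \<comment> \<open>Since y sums to zero, the constant column c of M does not contribute.\<close>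
  have "(y v* M) $ j = (\<Sum>k\<in>UNIV. y $ k * Q k j)" for j
    using balanced unfolding vector_matrix_mult_def Q_def
    by (simp add: right_diff_distrib sum_subtractf sum_distrib_right[symmetric])
  then have "(\<Sum>j\<in>UNIV. \<bar>(y v* M) $ j\<bar>) \<le> (\<Sum>j\<in>UNIV. \<Sum>k\<in>UNIV. \<bar>y $ k\<bar> * Q k j)"
    using Q_nonneg by (auto intro!: sum_mono order.trans[OF sum_abs] simp: abs_mult)
  also have "\<dots> = (\<Sum>k\<in>UNIV. \<bar>y $ k\<bar> * (\<Sum>j\<in>UNIV. Q k j))"
    by (subst sum.swap) (simp add: sum_distrib_left)
  also have "\<dots> = (1 - c) * (\<Sum>k\<in>UNIV. \<bar>y $ k\<bar>)"
    by (simp add: Q_row sum_distrib_left mult.commute)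
  finally show ?thesis .
qed

lemma distr_tendsto_stationary:
  assumes M: "row_stochastic M" and minor: "\<And>k. c \<le> M $ k $ i" "0 < c"
    and stationary: "p v* M = p" and p_sum: "(\<Sum>k\<in>UNIV. p $ k) = 1"
    and x_sum: "(\<Sum>k\<in>UNIV. x $ k) = 1"
  shows "(\<lambda>t. distr M x t $ j) \<longlonglongrightarrow> p $ j"
proof -
  define L where "L t = (\<Sum>k\<in>UNIV. \<bar>(distr M x t - p) $ k\<bar>)" for t
  have c_le_1: "c \<le> 1"
    using minor(1) row_stochastic_le_1[OF M] order.trans by blast
  have distr_sum: "(\<Sum>k\<in>UNIV. distr M x t $ k) = 1" for t
    by (induction t) (simp_all add: x_sum row_stochastic_sum_vector_matrix_mult[OF M])
  have L_step: "L (Suc t) \<le> (1 - c) * L t" for t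
  proof -
    have "distr M x (Suc t) - p = (distr M x t - p) v* M"
      by (simp add: vector_matrix_mult_diff_distrib stationary)
    moreover have "(\<Sum>k\<in>UNIV. (distr M x t - p) $ k) = 0"
      using distr_sum[of t] p_sum by (simp add: sum_subtractf)
    ultimately show ?thesis
      unfolding L_def by (simp only: row_stochastic_contraction[OF M minor(1)])
  qed
  have L_bound: "L t \<le> (1 - c) ^ t * L 0" for t
  proof (induction t)
    case (Suc t)
    have "L (Suc t) \<le> (1 - c) * L t" by (rule L_step)
    also have "\<dots> \<le> (1 - c) * ((1 - c) ^ t * L 0)"
      using Suc c_le_1 by (intro mult_left_mono) auto
    finally show ?case by (simp add: mult.assoc)
  qed simp
  have decay: "(\<lambda>t. (1 - c) ^ t * L 0) \<longlonglongrightarrow> 0"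
    using minor(2) c_le_1 by (intro tendsto_mult_left_zero LIMSEQ_power_zero) auto
  have "\<forall>t. norm (distr M x t $ j - p $ j) \<le> (1 - c) ^ t * L 0"
    using L_bound member_le_sum[of j UNIV "\<lambda>k. \<bar>(distr M x _ - p) $ k\<bar>"]
    unfolding L_def by (auto intro: order.trans)
  then have "(\<lambda>t. distr M x t $ j - p $ j) \<longlonglongrightarrow> 0"
    by (rule Lim_null_comparison[OF always_eventually decay])
  then show ?thesis by (rule LIM_zero_cancel)
qed

locale damped_walk =
  fixes P :: "real^'n^'n" and \<alpha> :: "'n::finite \<Rightarrow> real"
  assumes stochastic: "row_stochastic P"
    and damping: "\<And>k. 0 \<le> \<alpha> k \<and> \<alpha> k < 1"
begin

definition laplacian :: "real^'n^'n" where
  "laplacian = mat 1 - diagmat \<alpha> ** P"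

definition fundamental :: "real^'n^'n" where
  "fundamental = matrix_inv laplacian"

abbreviation restart :: "real^'n \<Rightarrow> real^'n^'n" where
  "restart v \<equiv> diagmat \<alpha> ** P + (mat 1 - diagmat \<alpha>) ** outer ones v"

lemma laplacian_mult_component: "(laplacian *v x) $ k = x $ k - \<alpha> k * (\<Sum>j\<in>UNIV. P $ k $ j * x $ j)"
proof -
  have "laplacian *v x = x - (diagmat \<alpha> ** P) *v x"
    unfolding laplacian_def by (simp add: matrix_vector_mult_diff_rdistrib)
  then show ?thesis
    by (simp add: matrix_vector_mult_def diagmat_mult_component sum_distrib_left mult.assoc)
qed

lemma laplacian_minimum_principle:
  assumes lower: "\<And>k. c \<le> (laplacian *v x) $ k" and "0 \<le> c"
  shows "c \<le> x $ k"
proof -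
  obtain l where min: "\<And>j. x $ l \<le> x $ j"
    using ex_argmin_finite[of "\<lambda>j. x $ j"] by blast
  have "x $ l \<le> (\<Sum>j\<in>UNIV. P $ l $ j * x $ j)"
  proof -
    have "x $ l = (\<Sum>j\<in>UNIV. P $ l $ j * x $ l)"
      using stochastic by (simp add: row_stochastic_def sum_distrib_right[symmetric])
    also have "\<dots> \<le> (\<Sum>j\<in>UNIV. P $ l $ j * x $ j)"
      using stochastic min by (intro sum_mono mult_left_mono) (auto simp: row_stochastic_def)
    finally show ?thesis .
  qed
  then have "\<alpha> l * x $ l \<le> \<alpha> l * (\<Sum>j\<in>UNIV. P $ l $ j * x $ j)"
    using damping[of l] by (intro mult_left_mono) auto
  then have c_le: "c \<le> x $ l - \<alpha> l * x $ l"
    using lower[of l] laplacian_mult_component[of x l] by linarith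
  then have "0 \<le> (1 - \<alpha> l) * x $ l"
    using \<open>0 \<le> c\<close> by (simp add: left_diff_distrib)
  then have "0 \<le> x $ l"
    using damping[of l] by (auto simp: zero_le_mult_iff)
  then have "c \<le> x $ l"
    using c_le damping[of l] mult_nonneg_nonneg[of "\<alpha> l" "x $ l"] by linarith
  then show ?thesis using min[of k] by linarith
qed

lemma laplacian_fundamental: "laplacian ** fundamental = mat 1" "fundamental ** laplacian = mat 1"
proof -
  have kernel_trivial: "x = 0" if "laplacian *v x = 0" for x
  proof -
    have neg: "(laplacian *v (- x)) $ k = - (laplacian *v x) $ k" for k
      by (simp add: laplacian_mult_component sum_negf)
    have nonpos: "0 \<le> (- x) $ k" for k
      by (rule laplacian_minimum_principle) (simp_all add: neg that)
    have nonneg: "0 \<le> x $ k" for k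
      by (rule laplacian_minimum_principle) (simp_all add: that)
    have "x $ k = 0" for k
      using nonpos[of k] nonneg[of k] by simp
    then show "x = 0"
      by (simp add: vec_eq_iff)
  qed
  have "\<exists>B. B ** laplacian = mat 1"
    unfolding matrix_left_invertible_ker using kernel_trivial by blast
  then obtain B where left: "B ** laplacian = mat 1" ..
  then have "laplacian ** B = mat 1"
    using matrix_left_right_inverse by blast
  then have "fundamental = B"
    unfolding fundamental_def by (rule matrix_inv_eq_right_inverse)
  with left \<open>laplacian ** B = mat 1\<close> show "laplacian ** fundamental = mat 1" "fundamental ** laplacian = mat 1"
    by simp_all
qed

lemma fundamental_row_sum_ge_1: "1 \<le> (fundamental *v ones) $ i"
proof (rule laplacian_minimum_principle)
  show "1 \<le> (laplacian *v (fundamental *v ones)) $ k" for k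
    by (simp add: matrix_vector_mul_assoc laplacian_fundamental ones_def)
qed simp

lemma restart_component: "restart v $ k $ j = \<alpha> k * P $ k $ j + (1 - \<alpha> k) * v $ j"
proof -
  have "mat 1 - diagmat \<alpha> = diagmat (\<lambda>k. 1 - \<alpha> k)"
    by (simp add: vec_eq_iff mat_def diagmat_def)
  then show ?thesis
    by (simp add: diagmat_mult_component outer_def ones_def)
qed

lemma restart_row_stochastic:
  assumes "\<And>j. 0 \<le> v $ j" and "(\<Sum>j\<in>UNIV. v $ j) = 1"
  shows "row_stochastic (restart v)"
  using assms stochastic damping[THEN conjunct2, THEN less_imp_le] damping
  unfolding row_stochastic_def restart_component
  by (auto simp: sum.distrib sum_distrib_left[symmetric] intro!: add_nonneg_nonneg mult_nonneg_nonneg)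

lemma vector_outer_ones_mult: "z v* outer ones v = (\<Sum>k\<in>UNIV. z $ k) *s v"
  by (simp add: vec_eq_iff vector_matrix_mult_def outer_def ones_def sum_distrib_right)

lemma restart_stationary:
  assumes solves: "x v* laplacian = v" and v_sum: "(\<Sum>j\<in>UNIV. v $ j) = 1"
  shows "x v* restart v = x"
proof -
  define y where "y = x v* diagmat \<alpha>"
  have "x - y v* P = v"
    using solves unfolding laplacian_def y_def
    by (simp add: vector_matrix_mult_diff_rdistrib vector_matrix_mul_assoc)
  then have x_eq: "x = y v* P + v"
    by (metis add.commute diff_eq_eq)
  \<comment> \<open>The restart mass of x is exactly one because P preserves sums.\<close>
  have "(\<Sum>k\<in>UNIV. x $ k) - (\<Sum>k\<in>UNIV. y $ k) = 1"
    using arg_cong[OF x_eq, of "\<lambda>z. \<Sum>k\<in>UNIV. z $ k"] v_sum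
    by (simp add: sum.distrib row_stochastic_sum_vector_matrix_mult[OF stochastic])
  then have "x v* (mat 1 - diagmat \<alpha>) v* outer ones v = v"
    by (simp add: y_def vector_matrix_mult_diff_rdistrib vector_outer_ones_mult sum_subtractf)
  then have "x v* restart v = y v* P + v"
    by (simp add: y_def vector_matrix_mult_add_rdistrib vector_matrix_mul_assoc)
  then show ?thesis using x_eq by simp
qed

lemma distr_restart_axis_tendsto:
  "(\<lambda>t. distr (restart (axis i 1)) (axis i 1) t $ j)
     \<longlonglongrightarrow> fundamental $ i $ j / (fundamental *v ones) $ i"
proof -
  define s where "s = (fundamental *v ones) $ i"
  define p where "p = (1 / s) *s (axis i 1 v* fundamental)"
  have "(axis i 1 v* fundamental) v* laplacian = axis i 1"
    by (simp add: vector_matrix_mul_assoc laplacian_fundamental)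
  then have "p v* restart (axis i 1) = p"
    unfolding p_def by (simp add: scalar_vector_matrix_assoc restart_stationary axis_def)
  moreover have "(\<Sum>k\<in>UNIV. p $ k) = 1"
    using fundamental_row_sum_ge_1[of i]
    by (simp add: p_def s_def axis_vector_matrix_mult_component matrix_vector_mult_def ones_def
        sum_divide_distrib[symmetric])
  moreover obtain l where l: "\<And>k. 1 - \<alpha> l \<le> 1 - \<alpha> k"
    using ex_argmin_finite[of "\<lambda>k. 1 - \<alpha> k"] by blast
  have column: "1 - \<alpha> k \<le> restart (axis i 1) $ k $ i" for k
    using stochastic damping[of k] unfolding restart_component by (simp add: row_stochastic_def)
  have "\<And>k. 1 - \<alpha> l \<le> restart (axis i 1) $ k $ i"
    using order.trans[OF l column] .
  moreover have "0 < 1 - \<alpha> l"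
    using damping[of l] by simp
  ultimately have "(\<lambda>t. distr (restart (axis i 1)) (axis i 1) t $ j) \<longlonglongrightarrow> p $ j"
    by (intro distr_tendsto_stationary restart_row_stochastic) (auto simp: axis_def)
  then show ?thesis
    by (simp add: p_def s_def axis_vector_matrix_mult_component)
qed

end

lemma transpose_diagmat: "transpose (diagmat a) = diagmat a"
  by (simp add: vec_eq_iff transpose_def diagmat_def)

lemma detailed_balance_inverse_symmetric:
  fixes P R :: "real^'n^'n::finite"
  assumes balance: "\<And>k l. w k * P $ k $ l = w l * P $ l $ k"
    and nonzero: "\<And>k. \<alpha> k \<noteq> 0"
    and right_inverse: "(mat 1 - diagmat \<alpha> ** P) ** R = mat 1"
  shows "w i / \<alpha> i * R $ i $ j = w j / \<alpha> j * R $ j $ i"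
proof -
  define D where "D = diagmat (\<lambda>k. w k / \<alpha> k)"
  define S where "S = D ** (mat 1 - diagmat \<alpha> ** P)"
  have "S $ k $ l = (if k = l then w k / \<alpha> k else 0) - w k * P $ k $ l" for k l
    using nonzero[of k]
    by (simp add: S_def D_def diagmat_mult_component mat_def right_diff_distrib)
  then have S_symmetric: "transpose S = S"
    by (simp add: vec_eq_iff transpose_def balance)
  have D_symmetric: "transpose D = D"
    unfolding D_def by (rule transpose_diagmat)
  have "S ** R = D"
    unfolding S_def by (simp add: matrix_mul_assoc[symmetric] right_inverse)
  then have "transpose (S ** R) = D"
    using D_symmetric by simp
  then have left: "transpose R ** S = D"
    by (simp add: matrix_transpose_mul S_symmetric)
  \<comment> \<open>Hence D R = R^T S R, which is symmetric because S is.\<close>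
  have DR_symmetric: "transpose (D ** R) = D ** R"
    unfolding left[symmetric] by (simp add: matrix_transpose_mul S_symmetric matrix_mul_assoc)
  have "(D ** R) $ i $ j = transpose (D ** R) $ j $ i"
    by (simp add: transpose_def)
  also have "\<dots> = (D ** R) $ j $ i"
    by (simp only: DR_symmetric)
  finally have "(D ** R) $ i $ j = (D ** R) $ j $ i" .
  then show ?thesis
    by (simp add: D_def diagmat_mult_component)
qed

lemma degree_pos:
  assumes nonneg: "\<And>k l. 0 \<le> W $ k $ l" and "0 < W $ i $ j"
  shows "0 < degree W i"
  using assms member_le_sum[of j UNIV "\<lambda>l. W $ i $ l"] unfolding degree_def by simp

lemma transmat_component:
  assumes "\<And>k. degree W k \<noteq> 0"
  shows "transmat W $ i $ j = W $ i $ j / degree W i"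
proof -
  have "matrix_inv (diagmat (degree W)) = diagmat (\<lambda>k. 1 / degree W k)"
    using assms
    by (intro matrix_inv_eq_right_inverse)
      (simp add: vec_eq_iff diagmat_mult_component mat_def, simp add: diagmat_def)
  moreover have "degmat W = diagmat (degree W)"
    by (simp add: degmat_def diagmat_def)
  ultimately show ?thesis
    unfolding transmat_def by (simp add: diagmat_mult_component)
qed

lemma row_stochastic_transmat:
  assumes nonneg: "\<And>k l. 0 \<le> W $ k $ l" and rowpos: "\<And>k. \<exists>l. 0 < W $ k $ l"
  shows "row_stochastic (transmat W)"
proof -
  have pos: "0 < degree W k" for k
    using rowpos[of k] degree_pos[OF nonneg] by blast
  then show ?thesis
    using nonneg
    by (auto simp: row_stochastic_def transmat_component less_imp_neq[symmetric]
        sum_divide_distrib[symmetric] degree_def[symmetric] intro: divide_nonneg_pos)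
qed

theorem theorem2:
  fixes W :: "real^'n^'n" and \<alpha> :: "'n::finite \<Rightarrow> real"
  assumes sym: "transpose W = W"
    and nonneg: "\<And>i j. W $ i $ j \<ge> 0"
    and rowpos: "\<And>i. \<exists>j. W $ i $ j > 0"
    and conn: "graph_connected W"
    and alpha: "\<And>i. 0 < \<alpha> i \<and> \<alpha> i < 1"
  shows "\<forall>i j. degree W i / (\<alpha> i * Kval W \<alpha> i) * pagerank W \<alpha> (axis i 1) j
             = degree W j / (\<alpha> j * Kval W \<alpha> j) * pagerank W \<alpha> (axis j 1) i"
proof (intro allI)
  fix i j
  have degree_nonzero: "degree W k \<noteq> 0" for k
    using rowpos[of k] degree_pos[OF nonneg] by fastforce
  have alpha_nonzero: "\<alpha> k \<noteq> 0" for k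
    using alpha[of k] by simp
  interpret damped_walk "transmat W" \<alpha>
    using row_stochastic_transmat[OF nonneg rowpos] alpha by unfold_locales (auto intro: less_imp_le)
  have pagerank: "pagerank W \<alpha> (axis k 1) l = fundamental $ k $ l / (fundamental *v ones) $ k" for k l
    unfolding pagerank_def restart_mat_def using distr_restart_axis_tendsto by (rule limI)
  have Kval: "Kval W \<alpha> k = 1 / (fundamental *v ones) $ k" for k
    unfolding Kval_def fundamental_def laplacian_def ..
  have "degree W k * transmat W $ k $ l = degree W l * transmat W $ l $ k" for k l
    using degree_nonzero arg_cong[OF sym, of "\<lambda>M. M $ l $ k"]
    by (simp add: transmat_component transpose_def)
  then have "degree W i / \<alpha> i * fundamental $ i $ j = degree W j / \<alpha> j * fundamental $ j $ i"
    using alpha_nonzero laplacian_fundamental(1) unfolding laplacian_def fundamental_def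
    by (rule detailed_balance_inverse_symmetric)
  then show "degree W i / (\<alpha> i * Kval W \<alpha> i) * pagerank W \<alpha> (axis i 1) j
      = degree W j / (\<alpha> j * Kval W \<alpha> j) * pagerank W \<alpha> (axis j 1) i"
    using fundamental_row_sum_ge_1[of i] fundamental_row_sum_ge_1[of j]
    by (simp add: pagerank Kval)
qed

end
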